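(* For every permutation $\pi$ in a Rauzy class, the modulus-two reduction of the Rauzy–Veech group preserves $Q_\pi$: $\overline{\mathrm{RV}}(\pi)\subseteq O(Q_\pi)$.
   Context: Permutations $\pi=(\pi_{\mathrm t},\pi_{\mathrm b})$ are pairs of bijections $\mathcal{A}\to\{1,\dots,d\}$, $d\ge3$, irreducible and nondegenerate. Rauzy induction: the top operation, with $\alpha_{\mathrm b,k}=\alpha_{\mathrm t,d}$, replaces the bottom row by $\alpha_{\mathrm b,1},\dots,\alpha_{\mathrm b,k},\alpha_{\mathrm b,d},\alpha_{\mathrm b,k+1},\dots,\alpha_{\mathrm b,d-1}$ (winner $\alpha_{\mathrm t,d}$, loser $\alpha_{\mathrm b,d}$); the bottom operation, with $\alpha_{\mathrm t,k}=\alpha_{\mathrm b,d}$, replaces the top row by $\alpha_{\mathrm t,1},\dots,\alpha_{\mathrm t,k},\alpha_{\mathrm t,d},\alpha_{\mathrm t,k+1},\dots,\alpha_{\mathrm t,d-1}$ (winner $\alpha_{\mathrm b,d}$, loser $\alpha_{\mathrm t,d}$); Rauzy classes are connected components of this directed graph. $B_\gamma=\mathrm{Id}+E_{\alpha_{\mathrm l}\alpha_{\mathrm w}}$ for an arrow, $B_{\gamma^{-1}}=B_\gamma^{-1}$, $B_{\gamma_1\cdots\gamma_n}=B_{\gamma_n}\cdots B_{\gamma_1}$; $\mathrm{RV}(\pi)$ is the group of $B_\gamma$ over closed walks at $\pi$ (arrows and reversed arrows), acting on row vectors. $(\Omega_\pi)_{\alpha\beta}=+1$ if $\pi_{\mathrm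 t}(\alpha)<\pi_{\mathrm t}(\beta)$ and $\pi_{\mathrm b}(\alpha)>\pi_{\mathrm b}(\beta)$, $-1$ if the reverse inequalities hold, $0$ otherwise. A bar denotes reduction mod 2. $Q_\pi(u)=\sum_{\pi_{\mathrm t}(\alpha)<\pi_{\mathrm t}(\beta)}u_\alpha(\Omega_\pi)_{\alpha\beta}u_\beta+\sum_\alpha u_\alpha\bmod2$ on $(\mathbb{Z}/2\mathbb{Z})^{\mathcal{A}}$, and $O(Q_\pi)$ is the group of invertible linear maps $S$ of $(\mathbb{Z}/2\mathbb{Z})^{\mathcal{A}}$ with $Q_\pi(uS)=Q_\pi(u)$ for all $u$. *)

theory Defs
  imports Main "HOL-Library.Z2" "HOL-Library.Cardinality"
begin

text \<open>A permutation on the finite alphabet 'a (with d = CARD('a)) is a pair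
  (pi_t, pi_b) of bijections 'a -> {1..d}.\<close>

type_synonym 'a perm2 = "('a \<Rightarrow> nat) \<times> ('a \<Rightarrow> nat)"

definition is_perm2 :: "('a::finite) perm2 \<Rightarrow> bool" where
  "is_perm2 p \<longleftrightarrow> bij_betw (fst p) UNIV {1..CARD('a)} \<and> bij_betw (snd p) UNIV {1..CARD('a)}"

definition irreducible :: "('a::finite) perm2 \<Rightarrow> bool" where
  "irreducible p \<longleftrightarrow> (\<forall>k. 1 \<le> k \<and> k < CARD('a) \<longrightarrow>
      {a. fst p a \<le> k} \<noteq> {a. snd p a \<le> k})"

text \<open>Degeneracy in the sense of Veech, written for the monodromy
  j \<mapsto> pi_b(alpha_{t,j}):
  (1) p(j+1) = p(j)+1; (2) p(j+1) = 1 and p(1) = p(j)+1;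
  (3) p(j+1) = p(d)+1 and p(j) = d, for some 1 \<le> j < d.\<close>

definition degenerate :: "('a::finite) perm2 \<Rightarrow> bool" where
  "degenerate p \<longleftrightarrow>
     (\<exists>a b. fst p b = fst p a + 1 \<and> snd p b = snd p a + 1) \<or>
     (\<exists>a b c. fst p b = fst p a + 1 \<and> fst p c = 1 \<and> snd p b = 1 \<and> snd p c = snd p a + 1) \<or>
     (\<exists>a b c. fst p b = fst p a + 1 \<and> fst p c = CARD('a) \<and> snd p b = snd p c + 1
              \<and> snd p a = CARD('a))"

definition letter_at :: "('a \<Rightarrow> nat) \<Rightarrow> nat \<Rightarrow> 'a" where
  "letter_at f j = (THE a. f a = j)"

text \<open>Moving the letter in last position d of row f to position k+1, shifting
  the letters in positions k+1..d-1 one step to the right.\<close>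
definition move_last :: "nat \<Rightarrow> nat \<Rightarrow> ('a \<Rightarrow> nat) \<Rightarrow> ('a \<Rightarrow> nat)" where
  "move_last d k f = (\<lambda>b. if f b \<le> k then f b else if f b = d then k + 1 else f b + 1)"

text \<open>Top operation: winner alpha_{t,d}, loser alpha_{b,d}; bottom row changes.\<close>
definition top_op :: "('a::finite) perm2 \<Rightarrow> 'a perm2" where
  "top_op p = (fst p, move_last CARD('a) (snd p (letter_at (fst p) CARD('a))) (snd p))"

text \<open>Bottom operation: winner alpha_{b,d}, loser alpha_{t,d}; top row changes.\<close>
definition bot_op :: "('a::finite) perm2 \<Rightarrow> 'a perm2" where
  "bot_op p = (move_last CARD('a) (fst p (letter_at (snd p) CARD('a))) (fst p), snd p)"

definition rauzy_arrow :: "('a::finite) perm2 \<Rightarrow> 'a perm2 \<Rightarrow> 'a \<Rightarrow> 'a \<Rightarrow> bool" where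
  "rauzy_arrow p q l w \<longleftrightarrow>
     (q = top_op p \<and> w = letter_at (fst p) CARD('a) \<and> l = letter_at (snd p) CARD('a)) \<or>
     (q = bot_op p \<and> w = letter_at (snd p) CARD('a) \<and> l = letter_at (fst p) CARD('a))"

type_synonym ('a, 'r) sqmat = "'a \<Rightarrow> 'a \<Rightarrow> 'r"

definition mat_id :: "('a, 'r::{zero,one}) sqmat" where
  "mat_id = (\<lambda>i j. if i = j then 1 else 0)"

definition mat_mult :: "('a::finite, 'r::comm_semiring_1) sqmat \<Rightarrow> ('a, 'r) sqmat \<Rightarrow> ('a, 'r) sqmat" where
  "mat_mult A B = (\<lambda>i j. \<Sum>k\<in>UNIV. A i k * B k j)"

definition vec_mat :: "('a::finite \<Rightarrow> 'r::comm_semiring_1) \<Rightarrow> ('a, 'r) sqmat \<Rightarrow> ('a \<Rightarrow> 'r)" where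
  "vec_mat u S = (\<lambda>j. \<Sum>i\<in>UNIV. u i * S i j)"

definition B_arrow :: "'a \<Rightarrow> 'a \<Rightarrow> ('a, int) sqmat" where
  "B_arrow l w = (\<lambda>i j. mat_id i j + (if i = l \<and> j = w then 1 else 0))"

definition B_arrow_inv :: "'a \<Rightarrow> 'a \<Rightarrow> ('a, int) sqmat" where
  "B_arrow_inv l w = (\<lambda>i j. mat_id i j - (if i = l \<and> j = w then 1 else 0))"

inductive walk_mat :: "('a::finite) perm2 \<Rightarrow> 'a perm2 \<Rightarrow> ('a, int) sqmat \<Rightarrow> bool"
  for p :: "'a perm2" where
  nil: "walk_mat p p mat_id"
| fwd: "walk_mat p q M \<Longrightarrow> rauzy_arrow q r l w \<Longrightarrow> walk_mat p r (mat_mult (B_arrow l w) M)"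
| bwd: "walk_mat p q M \<Longrightarrow> rauzy_arrow r q l w \<Longrightarrow> walk_mat p r (mat_mult (B_arrow_inv l w) M)"

definition RV :: "('a::finite) perm2 \<Rightarrow> ('a, int) sqmat set" where
  "RV p = {M. walk_mat p p M}"

definition mat_mod2 :: "('a, int) sqmat \<Rightarrow> ('a, bit) sqmat" where
  "mat_mod2 M = (\<lambda>i j. of_int (M i j))"

definition Omega :: "('a::finite) perm2 \<Rightarrow> ('a, int) sqmat" where
  "Omega p = (\<lambda>a b. if fst p a < fst p b \<and> snd p a > snd p b then 1
                   else if fst p a > fst p b \<and> snd p a < snd p b then -1 else 0)"

definition Qform :: "('a::finite) perm2 \<Rightarrow> ('a \<Rightarrow> bit) \<Rightarrow> bit" where
  "Qform p u = (\<Sum>a\<in>UNIV. \<Sum>b\<in>UNIV. if fst p a < fst p b then u a * of_int (Omega p a b) * u b else 0)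
               + (\<Sum>a\<in>UNIV. u a)"

definition OQ :: "('a::finite) perm2 \<Rightarrow> ('a, bit) sqmat set" where
  "OQ p = {S. (\<exists>T. mat_mult S T = mat_id \<and> mat_mult T S = mat_id) \<and>
              (\<forall>u. Qform p (vec_mat u S) = Qform p u)}"

end

theory Submission
  imports Defs
begin

text \<open>Modulo 2 the matrix \<open>B\<^sub>\<gamma> = Id + E\<^sub>l\<^sub>w\<close> of an arrow acts on row vectors as the transvection
  \<open>u \<mapsto> u + u\<^sub>l e\<^sub>w\<close>, an involution since loser and winner differ, and \<open>Q\<^sub>\<pi>(u)\<close> is the number of
  inverted pairs inside the support of \<open>u\<close> plus the size of the support. For a top arrow
  \<open>\<pi> \<rightarrow> \<pi>'\<close> let \<open>X\<close> be the number of letters \<open>a \<noteq> l\<close> of the support placed after \<open>w\<close> in the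
  bottom row. Flipping \<open>u\<^sub>w\<close> (when \<open>u\<^sub>l = 1\<close>) changes \<open>Q\<^sub>\<pi>\<close> by \<open>X\<close>, because \<open>w\<close> is last on top and
  \<open>l\<close> is after \<open>w\<close> at the bottom; the Rauzy move, which reinserts \<open>l\<close> right after \<open>w\<close> in the bottom
  row, toggles exactly the pairs \<open>{a, l}\<close> with \<open>a\<close> counted in \<open>X\<close>. Hence \<open>Q\<^sub>\<pi>(u B\<^sub>\<gamma>) = Q\<^sub>\<pi>\<^sub>'(u)\<close>.
  Bottom arrows follow by exchanging the rows, reversed arrows because \<open>B\<^sub>\<gamma>\<close> is an involution
  mod 2, and composing along a closed walk gives \<open>Q\<^sub>\<pi>(u B) = Q\<^sub>\<pi>(u)\<close>.\<close>

text \<open>The Z2 library rewrites \<open>+\<close> and \<open>*\<close> on \<open>bit\<close> into XOR and AND; we reason with the ring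
  operations instead.\<close>
declare add_bit_eq_xor [simp del] mult_bit_eq_and [simp del]

lemma if_one_zero_mult [simp]: "(if P then 1 else 0) * (x::'r::semiring_1) = (if P then x else 0)"
  by simp

lemma mult_if_one_zero [simp]: "(x::'r::semiring_1) * (if P then 1 else 0) = (if P then x else 0)"
  by simp

lemma mat_mult_assoc: "mat_mult (mat_mult A B) C = mat_mult A (mat_mult B C)"
  unfolding mat_mult_def
  by (auto simp: fun_eq_iff sum_distrib_left sum_distrib_right mult.assoc intro: sum.swap)

lemma mat_mult_id_left [simp]: "mat_mult mat_id A = A"
  unfolding mat_mult_def mat_id_def by (simp add: fun_eq_iff)

lemma mat_mult_eq_rows: "mat_mult A B = (\<lambda>i. vec_mat (A i) B)"
  unfolding mat_mult_def vec_mat_def by simp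

lemma vec_mat_mat_mult: "vec_mat u (mat_mult A B) = vec_mat (vec_mat u A) B"
  unfolding vec_mat_def mat_mult_def
  by (auto simp: fun_eq_iff sum_distrib_left sum_distrib_right mult.assoc intro: sum.swap)

lemma vec_mat_id [simp]: "vec_mat u mat_id = u"
  unfolding vec_mat_def mat_id_def by (simp add: fun_eq_iff)

lemma mat_mod2_mult: "mat_mod2 (mat_mult A B) = mat_mult (mat_mod2 A) (mat_mod2 B)"
  unfolding mat_mod2_def mat_mult_def by (simp add: of_int_sum)

lemma mat_mod2_id [simp]: "mat_mod2 mat_id = mat_id"
  unfolding mat_mod2_def mat_id_def by (simp add: fun_eq_iff)

definition mat_invertible :: "('a::finite, 'r::comm_semiring_1) sqmat \<Rightarrow> bool" where
  "mat_invertible S \<longleftrightarrow> (\<exists>T. mat_mult S T = mat_id \<and> mat_mult T S = mat_id)"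

lemma mat_invertible_id: "mat_invertible mat_id"
  unfolding mat_invertible_def by (auto intro: exI[of _ mat_id])

lemma mat_invertible_mult:
  assumes "mat_invertible A" and "mat_invertible B"
  shows "mat_invertible (mat_mult A B)"
proof -
  obtain A' where A': "mat_mult A A' = mat_id" "mat_mult A' A = mat_id"
    using assms(1) unfolding mat_invertible_def by blast
  obtain B' where B': "mat_mult B B' = mat_id" "mat_mult B' B = mat_id"
    using assms(2) unfolding mat_invertible_def by blast
  have "mat_mult (mat_mult A B) (mat_mult B' A') = mat_id"
    "mat_mult (mat_mult B' A') (mat_mult A B) = mat_id"
    using A' B' by (metis mat_mult_assoc mat_mult_id_left)+
  then show ?thesis unfolding mat_invertible_def by blast
qed

definition B_mod2 :: "'a \<Rightarrow> 'a \<Rightarrow> ('a, bit) sqmat" where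
  "B_mod2 l w = mat_mod2 (B_arrow l w)"

lemma mat_mod2_B_arrow_inv: "mat_mod2 (B_arrow_inv l w) = B_mod2 l w"
  unfolding B_mod2_def mat_mod2_def B_arrow_def B_arrow_inv_def by (simp add: fun_eq_iff)

lemma B_mod2_eq: "B_mod2 l w = (\<lambda>i j. (if i = j then 1 else 0) + (if i = l \<and> j = w then 1 else 0))"
  unfolding B_mod2_def mat_mod2_def B_arrow_def mat_id_def by (simp add: fun_eq_iff)

lemma vec_mat_B_mod2: "vec_mat u (B_mod2 l w) = (\<lambda>j. u j + (if j = w then u l else 0))"
  unfolding B_mod2_eq vec_mat_def by (simp add: fun_eq_iff distrib_left sum.distrib)

lemma B_mod2_involution:
  assumes "l \<noteq> w"
  shows "mat_mult (B_mod2 l w) (B_mod2 l w) = mat_id"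
proof -
  have "vec_mat (vec_mat u (B_mod2 l w)) (B_mod2 l w) = u" for u
    using assms by (simp add: vec_mat_B_mod2 fun_eq_iff add.assoc)
  then have "mat_mult (mat_mult mat_id (B_mod2 l w)) (B_mod2 l w) = mat_id"
    by (simp only: mat_mult_eq_rows)
  then show ?thesis by simp
qed

lemma mat_invertible_B_mod2: "l \<noteq> w \<Longrightarrow> mat_invertible (B_mod2 l w)"
  unfolding mat_invertible_def using B_mod2_involution by blast

definition quad_sum :: "('a::finite \<Rightarrow> 'a \<Rightarrow> bool) \<Rightarrow> ('a \<Rightarrow> 'r::comm_semiring_1) \<Rightarrow> 'r" where
  "quad_sum R u = (\<Sum>a\<in>UNIV. \<Sum>b\<in>UNIV. if R a b then u a * u b else 0)"

lemma quad_sum_row: "quad_sum (\<lambda>a b. a = x \<and> Q b) u = u x * (\<Sum>b\<in>UNIV. if Q b then u b else 0)"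
proof -
  have "quad_sum (\<lambda>a b. a = x \<and> Q b) u = (\<Sum>a\<in>UNIV. if a = x then \<Sum>b\<in>UNIV. if Q b then u x * u b else 0 else 0)"
    unfolding quad_sum_def by (rule sum.cong) auto
  then show ?thesis by (simp add: sum_distrib_left if_distrib cong: if_cong)
qed

lemma quad_sum_col: "quad_sum (\<lambda>a b. b = x \<and> Q a) u = u x * (\<Sum>a\<in>UNIV. if Q a then u a else 0)"
proof -
  have "quad_sum (\<lambda>a b. b = x \<and> Q a) u = (\<Sum>a\<in>UNIV. if Q a then u x * u a else 0)"
    unfolding quad_sum_def by (rule sum.cong) (auto simp: mult.commute)
  then show ?thesis by (simp add: sum_distrib_left if_distrib cong: if_cong)
qed

lemma quad_sum_disj:
  assumes "\<And>a b. \<not> (R a b \<and> R' a b)"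
  shows "quad_sum (\<lambda>a b. R a b \<or> R' a b) u = quad_sum R u + quad_sum R' u"
  unfolding quad_sum_def sum.distrib[symmetric] using assms by (intro sum.cong) auto

lemma quad_sum_xor:
  fixes u :: "'a::finite \<Rightarrow> bit"
  shows "quad_sum R' u = quad_sum R u + quad_sum (\<lambda>a b. R a b \<noteq> R' a b) u"
  unfolding quad_sum_def sum.distrib[symmetric] by (intro sum.cong) auto

lemma quad_sum_add_delta:
  assumes "\<not> R w w"
  shows "quad_sum R (\<lambda>a. u a + (if a = w then c else 0)) =
    quad_sum R u + c * (\<Sum>a\<in>UNIV. if R a w then u a else 0) + c * (\<Sum>b\<in>UNIV. if R w b then u b else 0)"
proof -
  have expand: "(if R a b then (u a + (if a = w then c else 0)) * (u b + (if b = w then c else 0)) else 0) =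
      (if R a b then u a * u b else 0) + (if b = w then if R a w then c * u a else 0 else 0)
      + (if a = w then if R w b then c * u b else 0 else 0)" for a b
    using assms by (auto simp: algebra_simps)
  have col: "(\<Sum>a\<in>UNIV. \<Sum>b\<in>UNIV. if b = w then if R a w then c * u a else 0 else 0)
      = c * (\<Sum>a\<in>UNIV. if R a w then u a else 0)"
    by (simp add: sum_distrib_left) (rule sum.cong; simp)
  have row: "(\<Sum>a\<in>UNIV. \<Sum>b\<in>UNIV. if a = w then if R w b then c * u b else 0 else 0)
      = c * (\<Sum>b\<in>UNIV. if R w b then u b else 0)"
    by (subst sum.swap) (simp add: sum_distrib_left, rule sum.cong; simp)
  show ?thesis
    unfolding quad_sum_def expand sum.distrib col row ..
qed

definition inversion :: "('a::finite) perm2 \<Rightarrow> 'a \<Rightarrow> 'a \<Rightarrow> bool" where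
  "inversion p a b \<longleftrightarrow> fst p a < fst p b \<and> snd p b < snd p a"

lemma Qform_eq_quad_sum: "Qform p u = quad_sum (inversion p) u + (\<Sum>a\<in>UNIV. u a)"
  unfolding Qform_def quad_sum_def inversion_def Omega_def
  by (intro arg_cong2[where f="(+)"] refl sum.cong) auto

lemma Qform_swap: "Qform (prod.swap p) u = Qform p u"
proof -
  have "quad_sum (inversion (prod.swap p)) u = quad_sum (inversion p) u"
    unfolding quad_sum_def inversion_def
    by (subst sum.swap) (auto simp: mult.commute intro!: sum.cong)
  then show ?thesis by (simp add: Qform_eq_quad_sum)
qed

lemma letter_at_eq: "inj f \<Longrightarrow> f a = j \<Longrightarrow> letter_at f j = a"
  unfolding letter_at_def by (rule the_equality) (auto dest: injD)

lemma letter_at_last: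
  fixes f :: "'a::finite \<Rightarrow> nat"
  assumes "bij_betw f UNIV {1..CARD('a)}"
  shows "f (letter_at f CARD('a)) = CARD('a)"
proof -
  have "CARD('a) \<in> f ` UNIV" using assms by (simp add: bij_betw_def Suc_le_eq)
  then obtain a where "f a = CARD('a)" by auto
  then show ?thesis using assms by (simp add: bij_betw_def letter_at_eq)
qed

definition last_letters_differ :: "('a::finite) perm2 \<Rightarrow> bool" where
  "last_letters_differ p \<longleftrightarrow> (\<forall>a. fst p a = CARD('a) \<longrightarrow> snd p a \<noteq> CARD('a))"

lemma last_letters_differ_iff:
  fixes p :: "('a::finite) perm2"
  assumes "is_perm2 p"
  shows "last_letters_differ p \<longleftrightarrow> snd p (letter_at (fst p) CARD('a)) \<noteq> CARD('a)"
proof -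
  have "fst p a = CARD('a) \<longleftrightarrow> a = letter_at (fst p) CARD('a)" for a
    using assms letter_at_last[of "fst p"] letter_at_eq[of "fst p" a]
    unfolding is_perm2_def bij_betw_def by blast
  then show ?thesis unfolding last_letters_differ_def by auto
qed

lemma irreducible_imp_last_letters_differ:
  fixes p :: "('a::finite) perm2"
  assumes "CARD('a) \<ge> 2" and "is_perm2 p" and "irreducible p"
  shows "last_letters_differ p"
  unfolding last_letters_differ_def
proof (intro allI impI notI)
  fix a :: 'a
  assume top: "fst p a = CARD('a)" and bot: "snd p a = CARD('a)"
  have below_last: "f b \<le> CARD('a) - 1 \<longleftrightarrow> b \<noteq> a"
    if "bij_betw f UNIV {1..CARD('a)}" and "f a = CARD('a)" for f :: "'a \<Rightarrow> nat" and b
  proof -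
    have "f b \<in> {1..CARD('a)}" "inj f" using that(1) by (auto simp: bij_betw_def)
    moreover have "b \<noteq> a \<Longrightarrow> f b \<noteq> f a" using \<open>inj f\<close> by (auto dest: injD)
    ultimately show ?thesis using that(2) finite_UNIV_card_ge_0[where 'a='a] by fastforce
  qed
  have "{b. fst p b \<le> CARD('a) - 1} = {b. snd p b \<le> CARD('a) - 1}"
    using below_last[of "fst p"] below_last[of "snd p"] assms(2) top bot
    unfolding is_perm2_def by blast
  moreover have "1 \<le> CARD('a) - 1" "CARD('a) - 1 < CARD('a)" using assms(1) by auto
  ultimately show False using assms(3) unfolding irreducible_def by blast
qed

lemma move_last_comp: "move_last d k f = move_last d k id \<circ> f"
  unfolding move_last_def by auto

lemma bij_betw_move_last_id: "bij_betw (move_last d k id) {1..d} {1..d}"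
proof -
  have "inj_on (move_last d k id) {1..d}" and "move_last d k id ` {1..d} \<subseteq> {1..d}"
    unfolding move_last_def inj_on_def by auto
  then show ?thesis by (simp add: bij_betw_def endo_inj_surj)
qed

lemma bij_betw_move_last_iff: "bij_betw (move_last d k f) A {1..d} \<longleftrightarrow> bij_betw f A {1..d}"
proof
  assume "bij_betw (move_last d k f) A {1..d}"
  then have bij: "bij_betw (move_last d k id \<circ> f) A {1..d}"
    unfolding move_last_comp[of d k f] .
  have "f ` A \<subseteq> {1..d}"
  proof (rule image_subsetI)
    fix a assume "a \<in> A"
    have "move_last d k id (f a) \<in> {1..d}" using bij_betw_apply[OF bij \<open>a \<in> A\<close>] by simp
    then show "f a \<in> {1..d}" unfolding move_last_def by (auto split: if_splits)
  qed
  then have "bij_betw f A {1..d} \<longleftrightarrow> bij_betw (move_last d k id \<circ> f) A {1..d}"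
    by (rule bij_betw_comp_iff2[OF bij_betw_move_last_id])
  then show "bij_betw f A {1..d}" using bij by blast
next
  assume "bij_betw f A {1..d}"
  then show "bij_betw (move_last d k f) A {1..d}"
    unfolding move_last_comp[of d k f] using bij_betw_move_last_id by (rule bij_betw_trans)
qed

lemma is_perm2_top_op_iff: "is_perm2 (top_op p) \<longleftrightarrow> is_perm2 p"
  unfolding is_perm2_def top_op_def by (simp only: prod.sel bij_betw_move_last_iff)

lemma last_letters_differ_top_op_iff:
  assumes "is_perm2 p"
  shows "last_letters_differ (top_op p) \<longleftrightarrow> last_letters_differ p"
proof -
  have "is_perm2 (top_op p)" using assms by (simp add: is_perm2_top_op_iff)
  then show ?thesis
    using assms by (simp add: last_letters_differ_iff top_op_def move_last_def)
qed

text \<open>Along Rauzy walks only this consequence of irreducibility is needed: the rows end with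
  different letters, so loser and winner are distinct.\<close>
definition admissible :: "('a::finite) perm2 \<Rightarrow> bool" where
  "admissible p \<longleftrightarrow> is_perm2 p \<and> last_letters_differ p"

lemma admissible_top_op_iff: "admissible (top_op p) \<longleftrightarrow> admissible p"
  unfolding admissible_def using is_perm2_top_op_iff last_letters_differ_top_op_iff by blast

lemma admissible_swap_iff: "admissible (prod.swap p) \<longleftrightarrow> admissible p"
  unfolding admissible_def is_perm2_def last_letters_differ_def by auto

lemma bot_op_eq_swap: "bot_op p = prod.swap (top_op (prod.swap p))"
  unfolding bot_op_def top_op_def by simp

lemma Qform_transvection:
  fixes t s :: "'a::finite \<Rightarrow> nat"
  assumes "inj t" and "t w = d" and "\<And>a. t a \<le> d" and "s l = d" and "s w < d"
  shows "Qform (t, s) (\<lambda>j. u j + (if j = w then u l else 0)) =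
    Qform (t, s) u + u l * (\<Sum>a\<in>UNIV. if a \<noteq> l \<and> s w < s a then u a else 0)"
proof -
  have inversion_w: "inversion (t, s) a w \<longleftrightarrow> s w < s a" for a
  proof
    assume "s w < s a"
    then have "t a \<noteq> t w" using \<open>inj t\<close> by (auto dest: injD)
    then show "inversion (t, s) a w"
      using \<open>s w < s a\<close> assms(2) assms(3)[of a] by (simp add: inversion_def)
  qed (simp add: inversion_def)
  have "\<not> inversion (t, s) w b" for b
    using assms(2) assms(3)[of b] by (simp add: inversion_def)
  then have "quad_sum (inversion (t, s)) (\<lambda>j. u j + (if j = w then u l else 0)) =
      quad_sum (inversion (t, s)) u + u l * (\<Sum>a\<in>UNIV. if s w < s a then u a else 0)"
    using quad_sum_add_delta[of "inversion (t, s)" w u "u l"] by (simp add: inversion_w)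
  then have "Qform (t, s) (\<lambda>j. u j + (if j = w then u l else 0)) =
      Qform (t, s) u + u l * (\<Sum>a\<in>UNIV. if s w < s a then u a else 0) + u l"
    unfolding Qform_eq_quad_sum sum.distrib by (simp add: add_ac)
  also have "(\<Sum>a\<in>UNIV. if s w < s a then u a else 0) =
      (\<Sum>a\<in>UNIV. (if a = l then u l else 0) + (if a \<noteq> l \<and> s w < s a then u a else 0))"
    using assms(4,5) by (intro sum.cong) auto
  finally show ?thesis
    by (cases "u l") (simp_all add: sum.distrib algebra_simps)
qed

lemma inversion_move_last_iff:
  fixes t s :: "'a::finite \<Rightarrow> nat"
  assumes "inj t" and "inj s" and "\<And>a. s a \<le> d" and "s l = d" and "k < d"
  shows "inversion (t, s) a b \<noteq> inversion (t, move_last d k s) a b \<longleftrightarrow>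
    (a = l \<and> b \<noteq> l \<and> t l < t b \<and> k < s b) \<or> (b = l \<and> a \<noteq> l \<and> t a < t l \<and> k < s a)"
proof -
  have s_ne: "c \<noteq> l \<Longrightarrow> s c \<noteq> d" for c using assms(2,4) by (auto dest: injD)
  have "move_last d k s l = k + 1" using assms(4,5) unfolding move_last_def by simp
  moreover have "c \<noteq> l \<Longrightarrow> move_last d k s c = (if s c \<le> k then s c else s c + 1)" for c
    using s_ne unfolding move_last_def by simp
  moreover have "c \<noteq> l \<Longrightarrow> t c \<noteq> t l" for c using assms(1) by (auto dest: injD)
  ultimately show ?thesis
    using assms(3)[of a] assms(3)[of b] assms(4) s_ne[of a] s_ne[of b] unfolding inversion_def
    by (cases "a = l"; cases "b = l") auto
qed

lemma Qform_move_last: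
  fixes t s :: "'a::finite \<Rightarrow> nat"
  assumes "inj t" and "inj s" and "\<And>a. s a \<le> d" and "s l = d" and "k < d"
  shows "Qform (t, move_last d k s) u =
    Qform (t, s) u + u l * (\<Sum>a\<in>UNIV. if a \<noteq> l \<and> k < s a then u a else 0)"
proof -
  have "quad_sum (inversion (t, move_last d k s)) u = quad_sum (inversion (t, s)) u +
      quad_sum (\<lambda>a b. (a = l \<and> b \<noteq> l \<and> t l < t b \<and> k < s b) \<or> (b = l \<and> a \<noteq> l \<and> t a < t l \<and> k < s a)) u"
    unfolding inversion_move_last_iff[OF assms, symmetric] by (rule quad_sum_xor)
  also have "\<dots> = quad_sum (inversion (t, s)) u
      + u l * (\<Sum>b\<in>UNIV. if b \<noteq> l \<and> t l < t b \<and> k < s b then u b else 0)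
      + u l * (\<Sum>a\<in>UNIV. if a \<noteq> l \<and> t a < t l \<and> k < s a then u a else 0)"
    by (subst quad_sum_disj) (auto simp: quad_sum_row quad_sum_col add.assoc)
  also have "\<dots> = quad_sum (inversion (t, s)) u + u l * (\<Sum>a\<in>UNIV. if a \<noteq> l \<and> k < s a then u a else 0)"
    unfolding add.assoc distrib_left[symmetric] sum.distrib[symmetric]
    using assms(1) by (intro arg_cong2[where f="(+)"] arg_cong2[where f="(*)"] refl sum.cong)
      (auto dest: injD)
  finally show ?thesis by (simp add: Qform_eq_quad_sum add_ac)
qed

lemma Qform_top_op:
  fixes p :: "('a::finite) perm2"
  defines "l \<equiv> letter_at (snd p) CARD('a)" and "w \<equiv> letter_at (fst p) CARD('a)"
  assumes "admissible p"
  shows "Qform p (vec_mat u (B_mod2 l w)) = Qform (top_op p) u"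
proof -
  define t s where "t = fst p" and "s = snd p"
  have bt: "bij_betw t UNIV {1..CARD('a)}" and bs: "bij_betw s UNIV {1..CARD('a)}"
    using assms(3) unfolding admissible_def is_perm2_def t_def s_def by auto
  then have "inj t" "inj s" and range: "t a \<le> CARD('a)" "s a \<le> CARD('a)" for a
    by (auto simp: bij_betw_def)
  have "t w = CARD('a)" and "s l = CARD('a)"
    using letter_at_last bt bs unfolding w_def l_def t_def s_def by blast+
  moreover have "s w < CARD('a)"
    using assms(3) last_letters_differ_iff range(2)[of w] le_neq_implies_less
    unfolding admissible_def s_def w_def by blast
  moreover have "p = (t, s)" and "top_op p = (t, move_last CARD('a) (s w) s)"
    unfolding top_op_def t_def s_def w_def by simp_all
  ultimately show ?thesis
    using Qform_transvection[of t w "CARD('a)" s l u] Qform_move_last[of t s "CARD('a)" l "s w" u]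
      \<open>inj t\<close> \<open>inj s\<close> range by (simp add: vec_mat_B_mod2)
qed

lemma admissible_last_letters_distinct:
  fixes p :: "('a::finite) perm2"
  assumes "admissible p"
  shows "letter_at (snd p) CARD('a) \<noteq> letter_at (fst p) CARD('a)"
  using assms last_letters_differ_iff letter_at_last unfolding admissible_def is_perm2_def by metis

definition Q_isometry :: "('a::finite) perm2 \<Rightarrow> 'a perm2 \<Rightarrow> ('a, bit) sqmat \<Rightarrow> bool" where
  "Q_isometry p q S \<longleftrightarrow> mat_invertible S \<and> (\<forall>u. Qform p (vec_mat u S) = Qform q u)"

lemma OQ_eq_Q_isometry: "OQ p = {S. Q_isometry p p S}"
  unfolding OQ_def Q_isometry_def mat_invertible_def by simp

lemma Q_isometry_id: "Q_isometry p p mat_id"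
  unfolding Q_isometry_def by (simp add: mat_invertible_id)

lemma Q_isometry_mult: "Q_isometry p q S \<Longrightarrow> Q_isometry q r T \<Longrightarrow> Q_isometry p r (mat_mult T S)"
  unfolding Q_isometry_def by (simp add: mat_invertible_mult vec_mat_mat_mult)

lemma Q_isometry_involution_sym:
  assumes "Q_isometry p q S" and "mat_mult S S = mat_id"
  shows "Q_isometry q p S"
proof -
  have "Qform q (vec_mat u S) = Qform p (vec_mat (vec_mat u S) S)" for u
    using assms(1) unfolding Q_isometry_def by simp
  then show ?thesis
    using assms unfolding Q_isometry_def by (simp add: vec_mat_mat_mult[symmetric])
qed

lemma Q_isometry_swap_iff: "Q_isometry (prod.swap p) (prod.swap q) S \<longleftrightarrow> Q_isometry p q S"
  unfolding Q_isometry_def by (simp add: Qform_swap)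

lemma Q_isometry_top_op:
  fixes p :: "('a::finite) perm2"
  assumes "admissible p"
  shows "Q_isometry p (top_op p) (B_mod2 (letter_at (snd p) CARD('a)) (letter_at (fst p) CARD('a)))"
  using assms Qform_top_op admissible_last_letters_distinct mat_invertible_B_mod2
  unfolding Q_isometry_def by blast

lemma rauzy_arrow_admissible_iff: "rauzy_arrow p q l w \<Longrightarrow> admissible q \<longleftrightarrow> admissible p"
  unfolding rauzy_arrow_def by (auto simp: bot_op_eq_swap admissible_top_op_iff admissible_swap_iff)

lemma rauzy_arrow_Q_isometry:
  assumes "rauzy_arrow p q l w" and "admissible p"
  shows "Q_isometry p q (B_mod2 l w)" and "Q_isometry q p (B_mod2 l w)"
proof -
  have "Q_isometry p q (B_mod2 l w) \<and> l \<noteq> w"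
    using assms unfolding rauzy_arrow_def
  proof (elim disjE conjE)
    assume "q = top_op p" "w = letter_at (fst p) CARD('a)" "l = letter_at (snd p) CARD('a)"
    then show ?thesis using assms(2) Q_isometry_top_op admissible_last_letters_distinct by blast
  next
    assume q: "q = bot_op p" and "w = letter_at (snd p) CARD('a)" "l = letter_at (fst p) CARD('a)"
    then have "Q_isometry (prod.swap p) (prod.swap q) (B_mod2 l w) \<and> l \<noteq> w"
      using assms(2) Q_isometry_top_op[of "prod.swap p"] admissible_last_letters_distinct[of "prod.swap p"]
      by (simp add: bot_op_eq_swap admissible_swap_iff)
    then show ?thesis by (simp add: Q_isometry_swap_iff)
  qed
  then show "Q_isometry p q (B_mod2 l w)" and "Q_isometry q p (B_mod2 l w)"
    using Q_isometry_involution_sym B_mod2_involution by blast+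
qed

lemma walk_mat_Q_isometry:
  assumes "walk_mat p q M" and "admissible p"
  shows "admissible q \<and> Q_isometry p q (mat_mod2 M)"
  using assms(1)
proof (induction rule: walk_mat.induct)
  case nil
  then show ?case using assms(2) by (simp add: Q_isometry_id)
next
  case (fwd q M r l w)
  then have "admissible r" and "Q_isometry q r (B_mod2 l w)"
    using rauzy_arrow_admissible_iff rauzy_arrow_Q_isometry(1) by blast+
  then show ?case
    using fwd.IH by (auto simp: mat_mod2_mult B_mod2_def[symmetric] intro: Q_isometry_mult)
next
  case (bwd q M r l w)
  then have "admissible r" using rauzy_arrow_admissible_iff by blast
  then have "Q_isometry q r (B_mod2 l w)" using bwd.hyps(2) by (blast intro: rauzy_arrow_Q_isometry(2))
  then show ?case
    using bwd.IH \<open>admissible r\<close> by (auto simp: mat_mod2_mult mat_mod2_B_arrow_inv intro: Q_isometry_mult)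
qed

theorem corollary2p12:
  fixes p :: "('a::finite) perm2"
  assumes "CARD('a) \<ge> 3"
    and "is_perm2 p"
    and "irreducible p"
    and "\<not> degenerate p"
  shows "mat_mod2 ` RV p \<subseteq> OQ p"
proof
  fix S assume "S \<in> mat_mod2 ` RV p"
  then obtain M where "walk_mat p p M" and "S = mat_mod2 M" unfolding RV_def by auto
  moreover have "CARD('a) \<ge> 2" using assms(1) by simp
  then have "admissible p"
    using assms(2,3) irreducible_imp_last_letters_differ unfolding admissible_def by blast
  ultimately show "S \<in> OQ p" using walk_mat_Q_isometry unfolding OQ_eq_Q_isometry by blast
qed

end
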